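(* Let $G$ be a strongly connected digraph with $n$ nodes. Then the burning number of $G$ is at most $\left\lceil \sqrt{2n+\tfrac14}-\tfrac12\right\rceil$. This bound is sharp: for every $n\ge1$ there is a strongly connected digraph on $n$ nodes whose burning number equals $\left\lceil \sqrt{2n+\tfrac14}-\tfrac12\right\rceil$.
   Context: Burning process on a digraph $D$: a sequence $(x_1,\ldots,x_b)$ of nodes is a burning sequence for $D$ if after $b$ steps of the following process every node of $D$ is burned; the $i$-th step consists of first burning all out-neighbours of all currently burned nodes, and then burning the node $x_i$. The burning number of $D$ is the length of a shortest burning sequence. Equivalently, with $N^+_k(v)$ the set of nodes reachable from $v$ by a directed path with at most $k$ arcs, the burning number is the least $b$ such that there are nodes $v_1,\ldots,v_b$ with $V(D)=\bigcup_{i=1}^b N^+_{i-1}(v_i)$. *)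

theory Defs
  imports Complex_Main
begin

text \<open>A digraph is given by a vertex set V and an arc relation E \<subseteq> V \<times> V
  (no loops). Multiple arcs are irrelevant for burning.\<close>

definition digraph :: "'a set \<Rightarrow> ('a \<times> 'a) set \<Rightarrow> bool" where
  "digraph V E \<longleftrightarrow> E \<subseteq> V \<times> V \<and> (\<forall>x. (x, x) \<notin> E)"

definition strongly_connected :: "'a set \<Rightarrow> ('a \<times> 'a) set \<Rightarrow> bool" where
  "strongly_connected V E \<longleftrightarrow> (\<forall>u\<in>V. \<forall>w\<in>V. (u, w) \<in> E\<^sup>*)"

definition out_ball :: "('a \<times> 'a) set \<Rightarrow> nat \<Rightarrow> 'a \<Rightarrow> 'a set" where
  "out_ball E k v = {u. \<exists>j\<le>k. (v, u) \<in> E ^^ j}"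

text \<open>(x_1,...,x_b) is a burning sequence, written 0-indexed as x 0, ..., x (b-1).\<close>
definition burning_seq :: "'a set \<Rightarrow> ('a \<times> 'a) set \<Rightarrow> nat \<Rightarrow> (nat \<Rightarrow> 'a) \<Rightarrow> bool" where
  "burning_seq V E b x \<longleftrightarrow> (\<forall>i<b. x i \<in> V) \<and> V = (\<Union>i<b. out_ball E i (x i))"

definition burning_number :: "'a set \<Rightarrow> ('a \<times> 'a) set \<Rightarrow> nat" where
  "burning_number V E = (LEAST b. \<exists>x. burning_seq V E b x)"

end

theory Submission
  imports Defs
begin

(* Upper bound: fix a root and a shortest-path tree, and cover greedily. If every node has depth
   at most k, the ball of radius k around the root covers everything. Otherwise let w be a deepest
   node and u its k-th ancestor: the ball of radius k around u contains the whole subtree below u,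
   which has at least k + 1 nodes (the path from u down to w), and removing that subtree leaves a
   tree with the same root. By induction on k, a tree with at most k(k+1)/2 nodes is covered by
   balls of radii 0, ..., k - 1, and ceil(sqrt(2n + 1/4) - 1/2) is the least k with n <= k(k+1)/2.
   Sharpness: in the directed cycle on n nodes a ball of radius i has at most i + 1 nodes, so
   b balls of radii 0, ..., b - 1 cover at most b(b+1)/2 nodes. *)

lemma out_ball_subset:
  assumes "E \<subseteq> V \<times> V" "v \<in> V"
  shows "out_ball E k v \<subseteq> V"
proof
  fix u assume "u \<in> out_ball E k v"
  then have "(v, u) \<in> E\<^sup>*"
    unfolding out_ball_def by (auto intro: relpow_imp_rtrancl)
  then show "u \<in> V"
    by (induction rule: rtrancl_induct) (use assms in auto)
qed

lemma burning_seqI: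
  assumes "E \<subseteq> V \<times> V" "\<forall>i<k. x i \<in> V" "V \<subseteq> (\<Union>i<k. out_ball E i (x i))"
  shows "burning_seq V E k x"
  unfolding burning_seq_def using assms out_ball_subset[OF assms(1)] by blast

lemma burning_number_le:
  "burning_seq V E k x \<Longrightarrow> burning_number V E \<le> k"
  unfolding burning_number_def by (rule Least_le) blast

lemma ceiling_sqrt_le_iff_triangular:
  "\<lceil>sqrt (2 * real n + 1/4) - 1/2\<rceil> \<le> int k \<longleftrightarrow> 2 * n \<le> k * (k + 1)"
proof -
  have "\<lceil>sqrt (2 * real n + 1/4) - 1/2\<rceil> \<le> int k \<longleftrightarrow> sqrt (2 * real n + 1/4) \<le> real k + 1/2"
    by (simp only: ceiling_le_iff of_int_of_nat_eq) linarith
  also have "\<dots> \<longleftrightarrow> 2 * real n + 1/4 \<le> (real k + 1/2)\<^sup>2"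
    using real_le_lsqrt[of "real k + 1/2" "2 * real n + 1/4"] sqrt_le_D by auto
  also have "\<dots> \<longleftrightarrow> real (2 * n) \<le> real (k * (k + 1))"
    by (simp add: power2_eq_square algebra_simps)
  also have "\<dots> \<longleftrightarrow> 2 * n \<le> k * (k + 1)"
    by linarith
  finally show ?thesis .
qed

lemma ceiling_sqrt_nonneg: "0 \<le> \<lceil>sqrt (2 * real n + 1/4) - 1/2\<rceil>"
proof -
  have "1/2 \<le> sqrt (2 * real n + 1/4)"
    by (rule real_le_rsqrt) (simp add: power2_eq_square)
  then show ?thesis by simp
qed

locale parent_tree =
  fixes R :: "'a set" and E :: "('a \<times> 'a) set" and r :: 'a
    and parent :: "'a \<Rightarrow> 'a" and depth :: "'a \<Rightarrow> nat"
  assumes root_in: "r \<in> R" and depth_root: "depth r = 0"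
    and parent: "\<And>w. w \<in> R \<Longrightarrow> w \<noteq> r \<Longrightarrow>
      parent w \<in> R \<and> (parent w, w) \<in> E \<and> depth w = Suc (depth (parent w))"
begin

(* The bound j \<le> depth x stops the ancestor chain at the root, where parent is unconstrained. *)
definition subtree :: "'a \<Rightarrow> 'a set" where
  "subtree u = {x \<in> R. \<exists>j\<le>depth x. (parent ^^ j) x = u}"

lemma exists_deepest:
  assumes "finite R"
  obtains w where "w \<in> R" "\<forall>x\<in>R. depth x \<le> depth w"
proof -
  have "Max (depth ` R) \<in> depth ` R"
    using assms root_in by (intro Max_in) auto
  then obtain w where "w \<in> R" "Max (depth ` R) = depth w"
    by blast
  moreover have "\<forall>x\<in>R. depth x \<le> Max (depth ` R)"
    using assms by simp
  ultimately show ?thesis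
    using that by simp
qed

lemma depth_eq_0D: "x \<in> R \<Longrightarrow> depth x = 0 \<Longrightarrow> x = r"
  using parent by fastforce

lemma funpow_parent:
  assumes "x \<in> R" "j \<le> depth x"
  shows "(parent ^^ j) x \<in> R \<and> depth ((parent ^^ j) x) = depth x - j
    \<and> ((parent ^^ j) x, x) \<in> E ^^ j"
  using assms(2)
proof (induction j)
  case 0
  then show ?case using assms(1) by simp
next
  case (Suc j)
  let ?y = "(parent ^^ j) x"
  have y: "?y \<in> R" "depth ?y = depth x - j" "(?y, x) \<in> E ^^ j"
    using Suc by auto
  then have "?y \<noteq> r"
    using Suc.prems depth_root by auto
  then have "parent ?y \<in> R" "(parent ?y, ?y) \<in> E" "depth ?y = Suc (depth (parent ?y))"
    using parent y(1) by auto
  then show ?case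
    using y relpow_Suc_I2 by auto
qed

lemma reachable_from_root: "x \<in> R \<Longrightarrow> (r, x) \<in> E ^^ depth x"
  using funpow_parent[of x "depth x"] depth_eq_0D by fastforce

lemma subset_out_ball_root: "\<forall>x\<in>R. depth x \<le> k \<Longrightarrow> R \<subseteq> out_ball E k r"
  unfolding out_ball_def using reachable_from_root by blast

lemma subtree_subset_out_ball:
  assumes "\<forall>x\<in>R. depth x \<le> depth u + k"
  shows "subtree u \<subseteq> out_ball E k u"
proof
  fix x assume "x \<in> subtree u"
  then obtain j where j: "x \<in> R" "j \<le> depth x" "(parent ^^ j) x = u"
    unfolding subtree_def by auto
  with funpow_parent have "depth u = depth x - j" "(u, x) \<in> E ^^ j"
    by auto
  moreover have "j \<le> k"
    using assms j(1,2) calculation(1) by fastforce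
  ultimately show "x \<in> out_ball E k u"
    unfolding out_ball_def by auto
qed

lemma ancestors_subset_subtree:
  assumes "w \<in> R" "k \<le> depth w"
  shows "(\<lambda>j. (parent ^^ j) w) ` {..k} \<subseteq> subtree ((parent ^^ k) w)"
proof
  fix y assume "y \<in> (\<lambda>j. (parent ^^ j) w) ` {..k}"
  then obtain j where j: "j \<le> k" "y = (parent ^^ j) w"
    by auto
  have y: "y \<in> R" "depth y = depth w - j"
    using funpow_parent[OF assms(1), of j] j assms(2) by auto
  have "(parent ^^ (k - j)) y = (parent ^^ k) w"
    using j by (metis funpow_add le_add_diff_inverse2 comp_apply)
  moreover have "k - j \<le> depth y"
    using y(2) j(1) assms(2) by linarith
  ultimately show "y \<in> subtree ((parent ^^ k) w)"
    unfolding subtree_def using y(1) by auto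
qed

lemma card_Diff_subtree_ancestor:
  assumes "finite R" "w \<in> R" "k \<le> depth w"
  shows "card (R - subtree ((parent ^^ k) w)) + Suc k \<le> card R"
proof -
  let ?T = "subtree ((parent ^^ k) w)"
  have "inj_on (\<lambda>j. (parent ^^ j) w) {..k}"
  proof (rule inj_onI)
    fix a b assume "a \<in> {..k}" "b \<in> {..k}" "(parent ^^ a) w = (parent ^^ b) w"
    moreover have "depth ((parent ^^ a) w) = depth w - a" "depth ((parent ^^ b) w) = depth w - b"
      using funpow_parent[OF assms(2)] calculation(1,2) assms(3) by auto
    ultimately show "a = b"
      using assms(3) by auto
  qed
  then have "Suc k = card ((\<lambda>j. (parent ^^ j) w) ` {..k})"
    by (simp add: card_image)
  also have "\<dots> \<le> card ?T"
    using ancestors_subset_subtree[OF assms(2,3)] assms(1)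
    by (intro card_mono) (auto simp: subtree_def)
  finally have "Suc k \<le> card ?T" .
  moreover have "?T \<subseteq> R"
    by (auto simp: subtree_def)
  then have "card (R - ?T) = card R - card ?T" "card ?T \<le> card R"
    using assms(1) by (auto intro: card_Diff_subset card_mono finite_subset)
  ultimately show ?thesis
    by linarith
qed

lemma parent_tree_Diff_subtree:
  assumes "u \<noteq> r"
  shows "parent_tree (R - subtree u) E r parent depth"
proof
  show "r \<in> R - subtree u"
    using root_in assms depth_root by (auto simp: subtree_def)
  show "depth r = 0"
    by (rule depth_root)
  fix x assume x: "x \<in> R - subtree u" "x \<noteq> r"
  then have p: "parent x \<in> R" "(parent x, x) \<in> E" "depth x = Suc (depth (parent x))"
    using parent by auto
  have "parent x \<notin> subtree u"
  proof
    assume "parent x \<in> subtree u"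
    then obtain j where "j \<le> depth (parent x)" "(parent ^^ Suc j) x = u"
      unfolding subtree_def by (auto simp: funpow_Suc_right simp del: funpow.simps)
    with p(3) x(1) show False
      unfolding subtree_def by auto
  qed
  then show "parent x \<in> R - subtree u \<and> (parent x, x) \<in> E \<and> depth x = Suc (depth (parent x))"
    using p by auto
qed

end

lemma parent_tree_cover:
  assumes "parent_tree R E r parent depth" "finite R" "2 * card R \<le> k * (k + 1)"
  shows "\<exists>x. (\<forall>i<k. x i \<in> R) \<and> R \<subseteq> (\<Union>i<k. out_ball E i (x i))"
  using assms
proof (induction k arbitrary: R)
  case 0
  then show ?case
    using parent_tree.root_in by fastforce
next
  case (Suc k)
  interpret parent_tree R E r parent depth by fact
  show ?case
  proof (cases "\<forall>x\<in>R. depth x \<le> k")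
    case True
    then show ?thesis
      using subset_out_ball_root root_in by (intro exI[of _ "\<lambda>_. r"]) blast
  next
    case False
    obtain w where w: "w \<in> R" "\<forall>x\<in>R. depth x \<le> depth w"
      using exists_deepest Suc.prems(2) by blast
    define u where "u = (parent ^^ k) w"
    have "k < depth w"
      using False w(2) by force
    then have u: "u \<in> R" "depth w = depth u + k"
      using funpow_parent[OF w(1), of k] unfolding u_def by auto
    then have "u \<noteq> r"
      using \<open>k < depth w\<close> depth_root by auto
    have cover_u: "subtree u \<subseteq> out_ball E k u"
      using subtree_subset_out_ball w(2) u(2) by simp
    have "card (R - subtree u) + Suc k \<le> card R"
      using card_Diff_subtree_ancestor[OF Suc.prems(2) w(1)] \<open>k < depth w\<close>
      unfolding u_def by simp
    then have "2 * card (R - subtree u) \<le> k * (k + 1)"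
      using Suc.prems(3) by simp
    then obtain x where x: "\<forall>i<k. x i \<in> R - subtree u"
        "R - subtree u \<subseteq> (\<Union>i<k. out_ball E i (x i))"
      using Suc.IH[OF parent_tree_Diff_subtree[OF \<open>u \<noteq> r\<close>]] Suc.prems(2) by blast
    have "R \<subseteq> (\<Union>i<Suc k. out_ball E i ((x(k := u)) i))"
      using x(2) cover_u by (force simp: less_Suc_eq)
    moreover have "\<forall>i<Suc k. (x(k := u)) i \<in> R"
      using x(1) u(1) by (simp add: less_Suc_eq)
    ultimately show ?thesis
      by blast
  qed
qed

lemma shortest_path_tree_exists:
  assumes "r \<in> V" "E \<subseteq> V \<times> V" "\<forall>w\<in>V. (r, w) \<in> E\<^sup>*"
  shows "\<exists>parent depth. parent_tree V E r parent depth"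
proof -
  define depth where "depth w = (LEAST j. (r, w) \<in> E ^^ j)" for w
  define parent where "parent w = (SOME y. (r, y) \<in> E ^^ (depth w - 1) \<and> (y, w) \<in> E)" for w
  have "parent_tree V E r parent depth"
  proof
    show "r \<in> V" by (rule assms(1))
    show "depth r = 0"
      unfolding depth_def by (rule Least_eq_0) simp
    fix w assume w: "w \<in> V" "w \<noteq> r"
    obtain j where "(r, w) \<in> E ^^ j"
      using assms(3) w(1) rtrancl_power by blast
    then have path: "(r, w) \<in> E ^^ depth w"
      unfolding depth_def by (rule LeastI)
    then obtain m where m: "depth w = Suc m"
      using w(2) by (cases "depth w") auto
    then obtain y where "(r, y) \<in> E ^^ m" "(y, w) \<in> E"
      using path by auto
    then have pw: "(r, parent w) \<in> E ^^ m" "(parent w, w) \<in> E"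
      unfolding parent_def m using someI[where P="\<lambda>y. (r, y) \<in> E ^^ m \<and> (y, w) \<in> E"] by auto
    have "depth (parent w) \<le> m"
      unfolding depth_def using pw(1) by (rule Least_le)
    moreover have "(r, w) \<in> E ^^ Suc (depth (parent w))"
      using pw by (auto simp: depth_def intro: LeastI)
    then have "Suc m \<le> Suc (depth (parent w))"
      unfolding m[symmetric] depth_def by (rule Least_le)
    ultimately show "parent w \<in> V \<and> (parent w, w) \<in> E \<and> depth w = Suc (depth (parent w))"
      using pw(2) assms(2) m by auto
  qed
  then show ?thesis by blast
qed

lemma burning_seq_if_triangular:
  assumes "V \<noteq> {}" "finite V" "digraph V E" "strongly_connected V E" "2 * card V \<le> k * (k + 1)"
  shows "\<exists>x. burning_seq V E k x"
proof -
  obtain r where r: "r \<in> V"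
    using assms(1) by auto
  have EV: "E \<subseteq> V \<times> V"
    using assms(3) unfolding digraph_def by auto
  have "\<forall>w\<in>V. (r, w) \<in> E\<^sup>*"
    using assms(4) r unfolding strongly_connected_def by blast
  then obtain parent depth where tree: "parent_tree V E r parent depth"
    using shortest_path_tree_exists[OF r EV] by blast
  obtain x where "\<forall>i<k. x i \<in> V" "V \<subseteq> (\<Union>i<k. out_ball E i (x i))"
    using parent_tree_cover[OF tree assms(2,5)] by blast
  then show ?thesis
    using burning_seqI[OF EV] by blast
qed

lemma burning_number_le_ceiling:
  assumes "V \<noteq> {}" "finite V" "digraph V E" "strongly_connected V E"
  shows "int (burning_number V E) \<le> \<lceil>sqrt (2 * real (card V) + 1/4) - 1/2\<rceil>"
proof -
  define k where "k = nat \<lceil>sqrt (2 * real (card V) + 1/4) - 1/2\<rceil>"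
  have k: "int k = \<lceil>sqrt (2 * real (card V) + 1/4) - 1/2\<rceil>"
    unfolding k_def using ceiling_sqrt_nonneg by (rule nat_0_le)
  then have "2 * card V \<le> k * (k + 1)"
    using ceiling_sqrt_le_iff_triangular[of "card V" k] by simp
  then obtain x where "burning_seq V E k x"
    using burning_seq_if_triangular[OF assms] by blast
  then have "burning_number V E \<le> k"
    by (rule burning_number_le)
  then show ?thesis
    using k by linarith
qed

lemma card_out_ball_single_valued:
  assumes "single_valued E"
  shows "card (out_ball E k v) \<le> Suc k"
proof -
  have "out_ball E k v = (\<Union>j\<le>k. (E ^^ j) `` {v})"
    unfolding out_ball_def by auto
  also have "card \<dots> \<le> (\<Sum>j\<le>k. card ((E ^^ j) `` {v}))"
    by (rule card_UN_le) simp
  also have "\<dots> \<le> (\<Sum>j\<le>k. 1)"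
  proof (rule sum_mono)
    fix j
    have "single_valued (E ^^ j)"
      using assms by (rule single_valued_relpow)
    then have "(E ^^ j) `` {v} = {} \<or> (\<exists>y. (E ^^ j) `` {v} = {y})"
      unfolding single_valued_def by blast
    then show "card ((E ^^ j) `` {v}) \<le> 1"
      by auto
  qed
  finally show ?thesis by simp
qed

lemma double_sum_lessThan_Suc: "2 * (\<Sum>i<k. Suc i) = k * (k + 1)"
  by (induction k) auto

lemma burning_seq_single_valued_card:
  assumes "single_valued E" "burning_seq V E b x"
  shows "2 * card V \<le> b * (b + 1)"
proof -
  have "card V = card (\<Union>i<b. out_ball E i (x i))"
    using assms(2) unfolding burning_seq_def by simp
  also have "\<dots> \<le> (\<Sum>i<b. card (out_ball E i (x i)))"
    by (rule card_UN_le) simp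
  also have "\<dots> \<le> (\<Sum>i<b. Suc i)"
    using card_out_ball_single_valued[OF assms(1)] by (rule sum_mono)
  finally show ?thesis
    using double_sum_lessThan_Suc[of b] by linarith
qed

(* The condition 2 \<le> n leaves the one-node cycle without arcs, since loops are excluded. *)
definition cycle_arcs :: "nat \<Rightarrow> (nat \<times> nat) set" where
  "cycle_arcs n = {(i, Suc i mod n) | i. i < n \<and> 2 \<le> n}"

lemma single_valued_cycle_arcs: "single_valued (cycle_arcs n)"
  unfolding single_valued_def cycle_arcs_def by auto

lemma digraph_cycle_arcs: "digraph {..<n} (cycle_arcs n)"
  unfolding digraph_def cycle_arcs_def by (auto simp: mod_Suc)

lemma strongly_connected_cycle_arcs: "strongly_connected {..<n} (cycle_arcs n)"
proof (cases "2 \<le> n")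
  case False
  then have "u = w" if "u < n" "w < n" for u w
    using that by linarith
  then show ?thesis
    unfolding strongly_connected_def by auto
next
  case True
  have walk: "(u, (u + j) mod n) \<in> (cycle_arcs n)\<^sup>*" if "u < n" for u j
  proof (induction j)
    case 0
    then show ?case using that by simp
  next
    case (Suc j)
    have "((u + j) mod n, (u + Suc j) mod n) \<in> cycle_arcs n"
      unfolding cycle_arcs_def using True by (auto simp: mod_Suc_eq)
    with Suc.IH show ?case
      by (rule rtrancl_into_rtrancl)
  qed
  show ?thesis
    unfolding strongly_connected_def
  proof (intro ballI)
    fix u w assume "u \<in> {..<n}" "w \<in> {..<n}"
    then have "(u + (n - u + w)) mod n = w" "u < n"
      by auto
    then show "(u, w) \<in> (cycle_arcs n)\<^sup>*"
      using walk[of u "n - u + w"] by simp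
  qed
qed

lemma burning_number_cycle:
  assumes "n \<ge> 1"
  shows "int (burning_number {..<n} (cycle_arcs n)) = \<lceil>sqrt (2 * real n + 1/4) - 1/2\<rceil>"
proof -
  let ?V = "{..<n}" and ?E = "cycle_arcs n"
  have ne: "?V \<noteq> {}"
    using assms by (simp add: lessThan_empty_iff)
  have "\<exists>x. burning_seq ?V ?E (2 * n) x"
    using burning_seq_if_triangular[OF ne _ digraph_cycle_arcs strongly_connected_cycle_arcs]
    by simp
  then have "\<exists>k x. burning_seq ?V ?E k x"
    by blast
  then have "\<exists>x. burning_seq ?V ?E (burning_number ?V ?E) x"
    unfolding burning_number_def by (rule LeastI_ex)
  then obtain x where "burning_seq ?V ?E (burning_number ?V ?E) x" ..
  then have "2 * card ?V \<le> burning_number ?V ?E * (burning_number ?V ?E + 1)"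
    by (rule burning_seq_single_valued_card[OF single_valued_cycle_arcs])
  then have "2 * n \<le> burning_number ?V ?E * (burning_number ?V ?E + 1)"
    by simp
  then have "\<lceil>sqrt (2 * real n + 1/4) - 1/2\<rceil> \<le> int (burning_number ?V ?E)"
    using ceiling_sqrt_le_iff_triangular by blast
  moreover have "int (burning_number ?V ?E) \<le> \<lceil>sqrt (2 * real n + 1/4) - 1/2\<rceil>"
    using burning_number_le_ceiling[OF ne _ digraph_cycle_arcs strongly_connected_cycle_arcs]
    by simp
  ultimately show ?thesis
    by linarith
qed

theorem mainTheorem7:
  shows "(\<forall>(V :: 'a set) E. finite V \<and> V \<noteq> {} \<and> digraph V E \<and> strongly_connected V E \<longrightarrow>
            int (burning_number V E) \<le> \<lceil>sqrt (2 * real (card V) + 1/4) - 1/2\<rceil>)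
      \<and> (\<forall>n::nat. n \<ge> 1 \<longrightarrow> (\<exists>(V :: nat set) E. finite V \<and> card V = n \<and> digraph V E \<and>
            strongly_connected V E \<and>
            int (burning_number V E) = \<lceil>sqrt (2 * real n + 1/4) - 1/2\<rceil>))"
proof (intro conjI allI impI)
  fix V :: "'a set" and E
  assume "finite V \<and> V \<noteq> {} \<and> digraph V E \<and> strongly_connected V E"
  then have "V \<noteq> {}" "finite V" "digraph V E" "strongly_connected V E"
    by auto
  then show "int (burning_number V E) \<le> \<lceil>sqrt (2 * real (card V) + 1/4) - 1/2\<rceil>"
    by (rule burning_number_le_ceiling)
next
  fix n :: nat assume "n \<ge> 1"
  then show "\<exists>(V :: nat set) E. finite V \<and> card V = n \<and> digraph V E \<and>
      strongly_connected V E \<and> int (burning_number V E) = \<lceil>sqrt (2 * real n + 1/4) - 1/2\<rceil>"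
    using digraph_cycle_arcs strongly_connected_cycle_arcs burning_number_cycle
    by (intro exI[of _ "{..<n}"] exI[of _ "cycle_arcs n"]) (simp only: finite_lessThan card_lessThan)
qed

end
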